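(* Let $T$ be a Bienaym\'e–Galton–Watson tree with $Z_0=1$ and offspring mean $1<\gamma<\infty$, extinction probability $q$, with i.i.d. edge resistances with distribution function $F$ on $[0,\infty)$. Then for every $\varepsilon>0$, $$\Pr\{R^\varepsilon(T)=\infty\}=\Pr\{R(T)=\infty\}=q.$$
   Context: Ulam–Harris-labelled tree, root $\langle 0\rangle$, generations $T_k$, $T_{[k]}$ the subtree on generations $0,\dots,k$. $R(T_{[k]})$ is the effective resistance between the root and $T_k$ (vertices of $T_k$ identified) in $T_{[k]}$, $\infty$ if $T_k=\emptyset$; $R(T)=\lim_k R(T_{[k]})\in[0,\infty]$. $R^\varepsilon(T)$ is the same quantity when each edge resistance $R(e)$ is replaced by $R(e)+\varepsilon$. $q=\Pr\{Z_n=0\text{ eventually}\}$. *)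

theory Defs
  imports "HOL-Probability.Probability"
begin

text \<open>Ulam--Harris labels are stored as REVERSED lists of child indices:
  the root is [], and the i-th child (i = 0,1,...) of vertex v is i # v.
  A realisation of the tree is given by the offspring numbers N v of all
  potential vertices v; v belongs to the tree iff its ancestors do and
  its index is below its parent's offspring number.\<close>

fun in_tree :: "(nat list \<Rightarrow> nat) \<Rightarrow> nat list \<Rightarrow> bool" where
  "in_tree N [] = True"
| "in_tree N (i # v) = (in_tree N v \<and> i < N v)"

definition generation :: "(nat list \<Rightarrow> nat) \<Rightarrow> nat \<Rightarrow> nat list set" where
  "generation N k = {v. length v = k \<and> in_tree N v}"

text \<open>res N Rs eps m v: effective resistance, in the tree below v truncated
  m generations below v, between v and the (identified) vertices m generations
  below v, where the edge from the parent of w to w has resistance Rs w + eps.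
  Series/parallel laws in [0,\<infinity>]; it is \<infinity> if there are no vertices
  m generations below v (empty sum of conductances is 0, inverse 0 = \<infinity>).\<close>
fun res :: "(nat list \<Rightarrow> nat) \<Rightarrow> (nat list \<Rightarrow> real) \<Rightarrow> real \<Rightarrow> nat \<Rightarrow> nat list \<Rightarrow> ennreal" where
  "res N Rs eps 0 v = 0"
| "res N Rs eps (Suc m) v =
     inverse (\<Sum>i<N v. inverse (ennreal (Rs (i # v) + eps) + res N Rs eps m (i # v)))"

definition res_trunc :: "(nat list \<Rightarrow> nat) \<Rightarrow> (nat list \<Rightarrow> real) \<Rightarrow> real \<Rightarrow> nat \<Rightarrow> ennreal" where
  "res_trunc N Rs eps k = res N Rs eps k []"

definition res_tree :: "(nat list \<Rightarrow> nat) \<Rightarrow> (nat list \<Rightarrow> real) \<Rightarrow> real \<Rightarrow> ennreal" where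
  "res_tree N Rs eps = lim (\<lambda>k. res_trunc N Rs eps k)"

end

theory Submission
  imports Defs
begin

text \<open>
  Both events \<open>R\<^sup>\<epsilon>(T) = \<infinity>\<close> and extinction occur for \<open>T\<close> iff they occur for the subtrees
  rooted at all children of the root. These subtrees are i.i.d. copies of \<open>T\<close>, so the
  probabilities of both events are fixed points of the offspring generating function \<open>f\<close>, and
  since \<open>\<gamma> > 1\<close>, \<open>f\<close> has at most one fixed point in \<open>[0,1)\<close>. Extinction implies \<open>R(T) = \<infinity>\<close>,
  which implies \<open>R\<^sup>\<epsilon>(T) = \<infinity>\<close>, so it remains to show \<open>P(R\<^sup>\<epsilon>(T) < \<infinity>) > 0\<close>.

  Cap the offspring numbers at \<open>C\<close>, choose \<open>L\<close> with \<open>\<mu> = E[min(Z\<^sub>1, C)] P(R(e) \<le> L) > 1\<close>,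
  and write \<open>R\<^sub>n\<close> for the \<open>\<epsilon>\<close>-resistance of the first \<open>n\<close> generations. Let \<open>W\<^sub>k\<close> count the
  vertices of generation \<open>k\<close> reached through edges of resistance at most \<open>L\<close> whose subtree has
  \<open>R\<^sub>n \<le> X\<close>. Then \<open>E W\<^sub>k = \<mu>\<^sup>k P(R\<^sub>n \<le> X)\<close> and \<open>E W\<^sub>k\<^sup>2 \<le> E W\<^sub>k + b (E W\<^sub>k)\<^sup>2\<close>, so by the
  Paley--Zygmund inequality, for \<open>k\<close> large, \<open>W\<^sub>k \<ge> 2\<close> with probability at least a fixed \<open>s > 0\<close>
  whenever \<open>P(R\<^sub>n \<le> X) \<ge> s\<close>. Two such vertices in parallel give \<open>R\<^sub>n\<^sub>+\<^sub>k \<le> k(L+\<epsilon>) + X/2 = X\<close> for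
  \<open>X = 2k(L+\<epsilon>)\<close>, and iterating over blocks of \<open>k\<close> generations yields \<open>P(R\<^sup>\<epsilon>(T) \<le> X) \<ge> s\<close>.
\<close>

section \<open>Resistance and extinction of a fixed tree\<close>

lemma ennreal_inverse_antimono:
  fixes a b :: ennreal
  assumes "a \<le> b"
  shows "inverse b \<le> inverse a"
proof (cases "a = 0 \<or> b = top")
  case False
  then obtain ra rb where "a = ennreal ra" "b = ennreal rb" "0 < ra" "0 \<le> rb"
    using assms by (cases a; cases b) (auto simp: top_unique)
  with assms show ?thesis by (simp add: inverse_ennreal le_imp_inverse_le)
qed auto

lemma tendsto_inverse_ennreal:
  assumes "(f \<longlongrightarrow> (a::ennreal)) F"
  shows "((\<lambda>x. inverse (f x)) \<longlongrightarrow> inverse a) F"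
proof -
  have "isCont inverse a"
    using continuous_on_inverse_ennreal[OF continuous_on_id[of UNIV]]
    by (simp add: continuous_on_eq_continuous_at)
  then show ?thesis using assms by (rule isCont_tendsto_compose)
qed

abbreviation subtree :: "nat \<Rightarrow> (nat list \<Rightarrow> 'b) \<Rightarrow> nat list \<Rightarrow> 'b" where
  "subtree i f \<equiv> \<lambda>u. f (u @ [i])"

lemma res_append: "res N Rs e m (w @ [i]) = res (subtree i N) (subtree i Rs) e m w"
proof (induction m arbitrary: w)
  case (Suc m)
  have "res N Rs e m (j # w @ [i]) = res (subtree i N) (subtree i Rs) e m (j # w)" for j
    using Suc.IH[of "j # w"] by simp
  then show ?case by simp
qed simp

lemma res_mono_Suc: "res N Rs e m v \<le> res N Rs e (Suc m) v"
proof (induction m arbitrary: v)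
  case (Suc m)
  have "(\<Sum>i<N v. inverse (ennreal (Rs (i # v) + e) + res N Rs e (Suc m) (i # v)))
     \<le> (\<Sum>i<N v. inverse (ennreal (Rs (i # v) + e) + res N Rs e m (i # v)))"
    by (intro sum_mono ennreal_inverse_antimono add_left_mono Suc.IH)
  then show ?case by (simp add: ennreal_inverse_antimono)
qed simp

lemma incseq_res: "incseq (\<lambda>m. res N Rs e m v)"
  by (rule incseq_SucI) (rule res_mono_Suc)

lemma res_mono: "m \<le> m' \<Longrightarrow> res N Rs e m v \<le> res N Rs e m' v"
  using incseq_res by (rule incseqD)

lemma res_mono_eps: "e \<le> e' \<Longrightarrow> res N Rs e m v \<le> res N Rs e' m v"
proof (induction m arbitrary: v)
  case (Suc m)
  have "(\<Sum>i<N v. inverse (ennreal (Rs (i # v) + e') + res N Rs e' m (i # v)))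
     \<le> (\<Sum>i<N v. inverse (ennreal (Rs (i # v) + e) + res N Rs e m (i # v)))"
    using Suc by (intro sum_mono ennreal_inverse_antimono add_mono ennreal_leI) auto
  then show ?case by (simp add: ennreal_inverse_antimono)
qed simp

lemma res_cong_edges:
  assumes "\<And>w. w \<noteq> [] \<Longrightarrow> Rs w = Rs' w"
  shows "res N Rs e m v = res N Rs' e m v"
  using assms by (induction m arbitrary: v) simp_all

definition res_lim :: "(nat list \<Rightarrow> nat) \<Rightarrow> (nat list \<Rightarrow> real) \<Rightarrow> real \<Rightarrow> nat list \<Rightarrow> ennreal" where
  "res_lim N Rs e v = (SUP m. res N Rs e m v)"

lemma res_tree_eq_res_lim: "res_tree N Rs e = res_lim N Rs e []"
  unfolding res_tree_def res_trunc_def res_lim_def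
  by (rule limI) (rule LIMSEQ_SUP[OF incseq_res])

lemma res_lim_rec:
  "res_lim N Rs e v = inverse (\<Sum>i<N v. inverse (ennreal (Rs (i # v) + e) + res_lim N Rs e (i # v)))"
proof -
  have "(\<lambda>m. res N Rs e (Suc m) v) \<longlonglongrightarrow> res_lim N Rs e v"
    unfolding res_lim_def by (rule LIMSEQ_Suc[OF LIMSEQ_SUP[OF incseq_res]])
  moreover have "(\<lambda>m. res N Rs e (Suc m) v) \<longlonglongrightarrow>
      inverse (\<Sum>i<N v. inverse (ennreal (Rs (i # v) + e) + res_lim N Rs e (i # v)))"
    unfolding res.simps res_lim_def
    by (intro tendsto_inverse_ennreal tendsto_sum tendsto_add tendsto_const LIMSEQ_SUP incseq_res)
  ultimately show ?thesis by (rule LIMSEQ_unique)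
qed

lemma res_lim_eq_top_iff: "res_lim N Rs e v = top \<longleftrightarrow> (\<forall>i<N v. res_lim N Rs e (i # v) = top)"
  by (subst res_lim_rec) (auto simp: ennreal_add_eq_top)

lemma res_lim_append: "res_lim N Rs e (w @ [i]) = res_lim (subtree i N) (subtree i Rs) e w"
  unfolding res_lim_def by (simp add: res_append)

lemma res_lim_mono_eps: "e \<le> e' \<Longrightarrow> res_lim N Rs e v \<le> res_lim N Rs e' v"
  unfolding res_lim_def by (intro SUP_mono) (auto intro: res_mono_eps)

lemma res_le_res_lim: "res N Rs e m v \<le> res_lim N Rs e v"
  unfolding res_lim_def by (rule SUP_upper) simp

lemma in_tree_append: "in_tree N (w @ [i]) \<longleftrightarrow> i < N [] \<and> in_tree (subtree i N) w"
  by (induction w) auto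

lemma generation_empty_mono:
  assumes "generation N n = {}" "n \<le> m"
  shows "generation N m = {}"
  using assms(2)
proof (induction rule: dec_induct)
  case (step k)
  then show ?case by (force simp: generation_def length_Suc_conv)
qed (rule assms(1))

lemma res_eq_top_if_no_descendant:
  "in_tree N v \<Longrightarrow> (\<And>w. length w = m \<Longrightarrow> \<not> in_tree N (w @ v)) \<Longrightarrow> res N Rs e m v = top"
proof (induction m arbitrary: v)
  case 0
  then show ?case by (metis append_Nil list.size(3))
next
  case (Suc m)
  have "res N Rs e m (i # v) = top" if "i < N v" for i
  proof (rule Suc.IH)
    show "in_tree N (i # v)" using Suc.prems(1) that by simp
    show "\<not> in_tree N (w @ i # v)" if "length w = m" for w
      using Suc.prems(2)[of "w @ [i]"] that by simp
  qed
  then show ?case by simp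
qed

lemma res_tree_eq_top_if_generation_empty:
  assumes "generation N m = {}"
  shows "res_tree N Rs e = top"
proof -
  have "res N Rs e m [] = top"
    using assms by (intro res_eq_top_if_no_descendant) (auto simp: generation_def)
  then show ?thesis
    using res_le_res_lim[of N Rs e m "[]"] by (simp add: res_tree_eq_res_lim top_unique)
qed

lemma generation_Suc_eq_empty_iff:
  "generation N (Suc n) = {} \<longleftrightarrow> (\<forall>i<N []. generation (subtree i N) n = {})"
proof -
  have "w @ [i] \<in> generation N (Suc n) \<longleftrightarrow> i < N [] \<and> w \<in> generation (subtree i N) n" for w i
    by (auto simp: generation_def in_tree_append)
  moreover have "v \<in> generation N (Suc n) \<Longrightarrow> \<exists>w i. v = w @ [i]" for v
    by (auto simp: generation_def length_Suc_conv_rev)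
  ultimately show ?thesis by blast
qed

definition extinct :: "(nat list \<Rightarrow> nat) \<Rightarrow> bool" where
  "extinct N \<longleftrightarrow> (\<exists>n. generation N n = {})"

lemma extinct_iff_subtrees: "extinct N \<longleftrightarrow> (\<forall>i<N []. extinct (subtree i N))"
proof
  assume "extinct N"
  then obtain n where n: "generation N n = {}" by (auto simp: extinct_def)
  have "[] \<in> generation N 0" by (simp add: generation_def)
  with n obtain m where "n = Suc m" by (cases n) auto
  with n show "\<forall>i<N []. extinct (subtree i N)"
    by (auto simp: extinct_def generation_Suc_eq_empty_iff)
next
  assume "\<forall>i<N []. extinct (subtree i N)"
  then obtain f where f: "\<And>i. i < N [] \<Longrightarrow> generation (subtree i N) (f i) = {}"
    unfolding extinct_def by metis
  define n where "n = Max (f ` {..<N []})"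
  have "generation (subtree i N) n = {}" if "i < N []" for i
    using f[OF that] by (rule generation_empty_mono) (simp add: n_def that)
  then have "generation N (Suc n) = {}" by (simp add: generation_Suc_eq_empty_iff)
  then show "extinct N" unfolding extinct_def ..
qed

lemma eventually_generation_empty_iff_extinct:
  "(\<exists>n0. \<forall>n\<ge>n0. generation N n = {}) \<longleftrightarrow> extinct N"
  unfolding extinct_def using generation_empty_mono by blast

section \<open>Configurations\<close>

text \<open>A configuration stores the offspring number of \<open>v\<close> at \<open>Inl v\<close> and the resistance of the
  edge into \<open>v\<close> at \<open>Inr v\<close>, so that a whole labelled tree is a single point of a product of
  Borel spaces; \<open>shift i z\<close> is the configuration of the subtree rooted at the \<open>i\<close>-th child of
  the root.\<close>

type_synonym coord = "nat list + nat list"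
type_synonym config = "coord \<Rightarrow> real"

definition offspring :: "config \<Rightarrow> nat list \<Rightarrow> nat" where
  "offspring z v = nat \<lfloor>z (Inl v)\<rfloor>"

definition edge_res :: "config \<Rightarrow> nat list \<Rightarrow> real" where
  "edge_res z v = z (Inr v)"

definition shift_coord :: "nat \<Rightarrow> coord \<Rightarrow> coord" where
  "shift_coord i = map_sum (\<lambda>w. w @ [i]) (\<lambda>w. w @ [i])"

definition shift :: "nat \<Rightarrow> config \<Rightarrow> config" where
  "shift i z = (\<lambda>j. z (shift_coord i j))"

abbreviation config_space :: "config measure" where
  "config_space \<equiv> PiM UNIV (\<lambda>_. borel)"

lemma offspring_shift: "offspring (shift i z) = subtree i (offspring z)"
  by (auto simp: offspring_def shift_def shift_coord_def)

lemma edge_res_shift: "edge_res (shift i z) = subtree i (edge_res z)"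
  by (auto simp: edge_res_def shift_def shift_coord_def)

lemma shift_coord_disjoint: "i \<noteq> i' \<Longrightarrow> shift_coord i j \<noteq> shift_coord i' j'"
  by (cases j; cases j') (simp_all add: shift_coord_def)

lemma shift_coord_neq_root [simp]:
  "shift_coord i j \<noteq> Inl []" "shift_coord i j \<noteq> Inr []"
  "Inl [] \<noteq> shift_coord i j" "Inr [] \<noteq> shift_coord i j"
  by (cases j; simp add: shift_coord_def)+

lemma inj_shift_coord: "inj (shift_coord i)"
  unfolding shift_coord_def by (intro sum.inj_map) (simp_all add: inj_def)

lemma shift_eqI: "(\<And>j. j \<in> range (shift_coord i) \<Longrightarrow> z j = z' j) \<Longrightarrow> shift i z = shift i z'"
  by (auto simp: shift_def)

lemma space_config_space [simp]: "space config_space = UNIV"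
  by (simp add: space_PiM)

lemma sets_Collect_config: "Measurable.pred config_space P \<Longrightarrow> {z. P z} \<in> sets config_space"
  by (simp add: pred_def)

lemma measurable_coord [measurable]: "(\<lambda>z. z j) \<in> borel_measurable config_space"
  by (rule measurable_component_singleton) simp

lemma measurable_shift [measurable]: "shift i \<in> measurable config_space config_space"
  unfolding shift_def[abs_def] by (rule measurable_PiM_single') simp_all

lemma pred_shift_in: "E \<in> sets config_space \<Longrightarrow> Measurable.pred config_space (\<lambda>z. shift i z \<in> E)"
  by (rule pred_sets2[OF _ measurable_shift])

lemma measurable_offspring [measurable]:
  "(\<lambda>z. offspring z v) \<in> measurable config_space (count_space UNIV)"
  unfolding offspring_def by measurable

lemma measurable_edge_res [measurable]: "(\<lambda>z. edge_res z v) \<in> borel_measurable config_space"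
  unfolding edge_res_def by measurable

lemma measurable_res_config [measurable]:
  "(\<lambda>z. res (offspring z) (edge_res z) e m v) \<in> borel_measurable config_space"
proof (induction m arbitrary: v)
  case (Suc m)
  note [measurable] = Suc.IH
  have "(\<lambda>z. inverse (\<Sum>i<n. inverse (ennreal (edge_res z (i # v) + e)
      + res (offspring z) (edge_res z) e m (i # v)))) \<in> borel_measurable config_space" for n
    by measurable
  from measurable_compose_countable'[OF this measurable_offspring] show ?case by simp
qed simp

lemma pred_in_tree [measurable]: "Measurable.pred config_space (\<lambda>z. in_tree (offspring z) v)"
  by (induction v) simp_all

lemma pred_extinct [measurable]: "Measurable.pred config_space (\<lambda>z. extinct (offspring z))"
proof -
  have "extinct N \<longleftrightarrow> (\<exists>n. \<forall>v. length v = n \<longrightarrow> \<not> in_tree N v)" for N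
    by (auto simp: extinct_def generation_def)
  then show ?thesis by simp
qed

definition res_cfg :: "real \<Rightarrow> nat \<Rightarrow> config \<Rightarrow> ennreal" where
  "res_cfg e m z = res (offspring z) (edge_res z) e m []"

definition res_lim_cfg :: "real \<Rightarrow> config \<Rightarrow> ennreal" where
  "res_lim_cfg e z = res_lim (offspring z) (edge_res z) e []"

lemma res_cfg_child: "res (offspring z) (edge_res z) e m [i] = res_cfg e m (shift i z)"
  using res_append[of _ _ e m "[]" i] by (simp add: res_cfg_def offspring_shift edge_res_shift)

lemma res_cfg_Suc:
  "res_cfg e (Suc m) z = inverse (\<Sum>i<offspring z [].
     inverse (ennreal (edge_res (shift i z) [] + e) + res_cfg e m (shift i z)))"
  by (simp add: res_cfg_def res_cfg_child edge_res_shift)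

lemma res_lim_cfg_eq_SUP: "res_lim_cfg e z = (SUP m. res_cfg e m z)"
  by (simp add: res_lim_cfg_def res_lim_def res_cfg_def)

lemma res_lim_cfg_eq_top_iff:
  "res_lim_cfg e z = top \<longleftrightarrow> (\<forall>i<offspring z []. res_lim_cfg e (shift i z) = top)"
proof -
  have "res_lim (offspring z) (edge_res z) e [i] = res_lim_cfg e (shift i z)" for i
    using res_lim_append[of _ _ e "[]" i] by (simp add: res_lim_cfg_def offspring_shift edge_res_shift)
  then show ?thesis
    unfolding res_lim_cfg_def[of e z] by (subst res_lim_eq_top_iff) simp
qed

lemma extinct_iff_shift: "extinct (offspring z) \<longleftrightarrow> (\<forall>i<offspring z []. extinct (offspring (shift i z)))"
  by (simp add: extinct_iff_subtrees[of "offspring z"] offspring_shift)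

lemma measurable_res_cfg [measurable]: "res_cfg e m \<in> borel_measurable config_space"
  unfolding res_cfg_def[abs_def] by measurable

lemma measurable_res_lim_cfg [measurable]: "res_lim_cfg e \<in> borel_measurable config_space"
  unfolding res_lim_cfg_def[abs_def] res_lim_def by measurable

lemma res_cfg_mono: "m \<le> m' \<Longrightarrow> res_cfg e m z \<le> res_cfg e m' z"
  unfolding res_cfg_def by (rule res_mono)

lemma res_cfg_le_res_lim_cfg: "res_cfg e m z \<le> res_lim_cfg e z"
  unfolding res_cfg_def res_lim_cfg_def by (rule res_le_res_lim)

lemma res_lim_cfg_eq_top_if_extinct: "extinct (offspring z) \<Longrightarrow> res_lim_cfg e z = top"
  unfolding extinct_def res_lim_cfg_def
  by (metis res_tree_eq_top_if_generation_empty res_tree_eq_res_lim)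

lemma res_lim_cfg_eq_top_mono_eps: "e \<le> e' \<Longrightarrow> res_lim_cfg e z = top \<Longrightarrow> res_lim_cfg e' z = top"
  unfolding res_lim_cfg_def by (metis res_lim_mono_eps top.extremum_unique)

definition determined_by :: "coord set \<Rightarrow> (config \<Rightarrow> 'b) \<Rightarrow> bool" where
  "determined_by K H \<longleftrightarrow> (\<forall>z z'. (\<forall>j\<in>K. z j = z' j) \<longrightarrow> H z = H z')"

lemma determined_by_comp: "determined_by K H \<Longrightarrow> determined_by K (\<lambda>z. f (H z))"
  unfolding determined_by_def by metis

lemma determined_by_shift: "determined_by (range (shift_coord i)) (\<lambda>z. G (shift i z))"
  unfolding determined_by_def by (metis shift_eqI)

lemma determined_by_offspring_root: "determined_by {Inl []} (\<lambda>z. f (offspring z []))"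
  by (simp add: determined_by_def offspring_def)

lemma determined_by_edge_res_root: "determined_by {Inr []} (\<lambda>z. f (edge_res z []))"
  by (simp add: determined_by_def edge_res_def)

lemma determined_by_res_cfg: "determined_by (- {Inr []}) (res_cfg e m)"
proof -
  have "res_cfg e m z = res_cfg e m z'" if "\<forall>j\<in>- {Inr []}. z j = z' j" for z z'
  proof -
    have "offspring z = offspring z'" using that by (simp add: fun_eq_iff offspring_def)
    moreover have "edge_res z w = edge_res z' w" if "w \<noteq> []" for w
      using \<open>\<forall>j\<in>- {Inr []}. z j = z' j\<close> that by (simp add: edge_res_def)
    ultimately show ?thesis unfolding res_cfg_def by (metis res_cong_edges)
  qed
  then show ?thesis by (simp add: determined_by_def)
qed

section \<open>The law of the tree and the fixed-point equation\<close>

locale bgw_tree =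
  fixes M :: "'a measure" and N :: "nat list \<Rightarrow> 'a \<Rightarrow> nat" and Rs :: "nat list \<Rightarrow> 'a \<Rightarrow> real"
  assumes prob_space_M: "prob_space M"
    and N_meas: "\<And>v. N v \<in> measurable M (count_space UNIV)"
    and Rs_meas: "\<And>v. Rs v \<in> borel_measurable M"
    and indep: "prob_space.indep_vars M (\<lambda>_. borel)
                  (\<lambda>j. case j of Inl v \<Rightarrow> (\<lambda>\<omega>. real (N v \<omega>)) | Inr v \<Rightarrow> Rs v) UNIV"
    and N_ident: "\<And>v. distr M (count_space UNIV) (N v) = distr M (count_space UNIV) (N [])"
    and Rs_ident: "\<And>v. distr M borel (Rs v) = distr M borel (Rs [])"
begin

sublocale M: prob_space M by (rule prob_space_M)

definition coord_var :: "coord \<Rightarrow> 'a \<Rightarrow> real" where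
  "coord_var j = (case j of Inl v \<Rightarrow> (\<lambda>\<omega>. real (N v \<omega>)) | Inr v \<Rightarrow> Rs v)"

definition config_of :: "'a \<Rightarrow> config" where
  "config_of \<omega> = (\<lambda>j. coord_var j \<omega>)"

definition law :: "config measure" where
  "law = distr M config_space config_of"

definition coord_law :: "coord \<Rightarrow> real measure" where
  "coord_law j = distr M borel (coord_var j)"

lemma measurable_coord_var [measurable]: "coord_var j \<in> borel_measurable M"
  using N_meas Rs_meas by (cases j) (simp_all add: coord_var_def)

lemma measurable_config_of [measurable]: "config_of \<in> measurable M config_space"
  unfolding config_of_def by (rule measurable_PiM_single') simp_all

lemma offspring_config_of: "offspring (config_of \<omega>) = (\<lambda>v. N v \<omega>)"
  by (simp add: fun_eq_iff offspring_def config_of_def coord_var_def)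

lemma edge_res_config_of: "edge_res (config_of \<omega>) = (\<lambda>v. Rs v \<omega>)"
  by (simp add: fun_eq_iff edge_res_def config_of_def coord_var_def)

lemma law_eq_PiM: "law = PiM UNIV coord_law"
proof -
  have "M.indep_vars (\<lambda>_. borel) coord_var UNIV"
    using indep by (simp add: coord_var_def[abs_def])
  then have "distr M config_space (\<lambda>\<omega>. \<lambda>j\<in>UNIV. coord_var j \<omega>)
      = PiM UNIV (\<lambda>j. distr M borel (coord_var j))"
    by (simp add: M.indep_vars_iff_distr_eq_PiM)
  then show ?thesis by (simp add: law_def config_of_def[abs_def] coord_law_def[abs_def] restrict_UNIV)
qed

lemma prob_space_coord_law: "prob_space (coord_law j)"
  unfolding coord_law_def by (rule M.prob_space_distr) simp

lemma coord_law_shift_coord: "coord_law (shift_coord i j) = coord_law j"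
proof -
  have "coord_law (Inl v) = coord_law (Inl [])" for v
  proof -
    have "coord_law (Inl v) = distr (distr M (count_space UNIV) (N v)) borel real" for v
      unfolding coord_law_def coord_var_def using N_meas by (simp add: distr_distr comp_def)
    then show ?thesis using N_ident by metis
  qed
  moreover have "coord_law (Inr v) = coord_law (Inr [])" for v
    unfolding coord_law_def coord_var_def using Rs_ident by simp
  ultimately show ?thesis by (cases j) (metis shift_coord_def map_sum.simps)+
qed

sublocale law: prob_space law
  unfolding law_def by (rule M.prob_space_distr) simp

lemma sets_law [simp, measurable_cong]: "sets law = sets config_space"
  by (simp add: law_def)

lemma space_law [simp]: "space law = UNIV"
  by (simp add: law_def)

lemma distr_law_shift: "distr law config_space (shift i) = law"
proof -
  have "distr (PiM UNIV coord_law) (PiM UNIV (\<lambda>j. coord_law (shift_coord i j)))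
      (\<lambda>z. \<lambda>j\<in>UNIV. z (shift_coord i j)) = PiM UNIV (\<lambda>j. coord_law (shift_coord i j))"
    by (rule distr_PiM_reindex) (auto simp: prob_space_coord_law inj_shift_coord)
  moreover have "sets (PiM UNIV coord_law) = sets config_space"
    by (rule sets_PiM_cong) (simp_all add: coord_law_def)
  ultimately show ?thesis
    by (simp add: law_eq_PiM coord_law_shift_coord shift_def[abs_def] restrict_UNIV cong: distr_cong)
qed

lemma indep_coords: "law.indep_vars (\<lambda>_. borel) (\<lambda>j z. z j) UNIV"
proof -
  have "distr law borel (\<lambda>z. z j) = coord_law j" for j
  proof -
    have "distr law borel (\<lambda>z. z j) = distr (PiM UNIV coord_law) (coord_law j) (\<lambda>z. z j)"
      by (rule distr_cong) (simp_all add: law_eq_PiM coord_law_def)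
    also have "\<dots> = coord_law j" by (rule distr_PiM_component) (simp_all add: prob_space_coord_law)
    finally show ?thesis .
  qed
  moreover have "distr law config_space (\<lambda>z. \<lambda>j\<in>UNIV. z j) = distr law law (\<lambda>z. z)"
    by (rule distr_cong) (simp_all add: restrict_UNIV)
  ultimately have "distr law config_space (\<lambda>z. \<lambda>j\<in>UNIV. z j)
      = PiM UNIV (\<lambda>j. distr law borel (\<lambda>z. z j))"
    by (simp add: law_eq_PiM)
  then show ?thesis by (subst law.indep_vars_iff_distr_eq_PiM) simp_all
qed

lemma indep_vars_determined_by:
  assumes "disjoint_family_on K I"
    and "\<And>l. l \<in> I \<Longrightarrow> H l \<in> borel_measurable config_space"
    and "\<And>l. l \<in> I \<Longrightarrow> determined_by (K l) (H l)"
  shows "law.indep_vars (\<lambda>_. borel) H I"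
proof -
  define extend where "extend l y = (\<lambda>j. if j \<in> K l then y j else 0)" for l and y :: config
  have [measurable]: "extend l \<in> measurable (PiM (K l) (\<lambda>_. borel)) config_space" for l
    unfolding extend_def[abs_def]
  proof (rule measurable_PiM_single')
    show "(\<lambda>y. if j \<in> K l then y j else 0) \<in> borel_measurable (PiM (K l) (\<lambda>_. borel))" for j
      by (cases "j \<in> K l") (simp_all add: measurable_component_singleton)
  qed simp
  have "law.indep_vars (\<lambda>l. PiM (K l) (\<lambda>_. borel)) (\<lambda>l z. restrict z (K l)) I"
    using law.indep_vars_restrict[OF indep_coords, of I K] assms(1) by simp
  then have "law.indep_vars (\<lambda>_. borel) (\<lambda>l z. H l (extend l (restrict z (K l)))) I"
    by (rule law.indep_vars_compose2) (use assms(2) in measurable)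
  moreover have "H l (extend l (restrict z (K l))) = H l z" if "l \<in> I" for l z
    using assms(3)[OF that] by (simp add: determined_by_def extend_def)
  ultimately show ?thesis by (simp cong: law.indep_vars_cong)
qed

lemma integral_mult_determined_by:
  fixes F G :: "config \<Rightarrow> real"
  assumes "A \<inter> B = {}" "determined_by A F" "determined_by B G"
    and "F \<in> borel_measurable config_space" "G \<in> borel_measurable config_space"
    and "integrable law F" "integrable law G"
  shows "(\<integral>z. F z * G z \<partial>law) = (\<integral>z. F z \<partial>law) * (\<integral>z. G z \<partial>law)"
proof (rule law.indep_var_lebesgue_integral)
  have "law.indep_vars (\<lambda>_. borel) (case_bool F G) UNIV"
    using assms(1-5)
    by (intro indep_vars_determined_by[where K="case_bool A B"])
       (auto simp: disjoint_family_on_def split: bool.split)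
  moreover have "(\<lambda>_. borel) = case_bool borel borel"
    by (rule ext) (simp split: bool.split)
  ultimately show "law.indep_var borel F borel G"
    unfolding law.indep_var_def by metis
qed (fact assms)+

lemma integrable_law_bounded:
  fixes f :: "config \<Rightarrow> real"
  assumes "f \<in> borel_measurable config_space" "\<And>z. \<bar>f z\<bar> \<le> B"
  shows "integrable law f"
  using assms by (intro law.integrable_const_bound[where B=B]) simp_all

lemma integral_shift:
  fixes f :: "config \<Rightarrow> real"
  assumes [measurable]: "f \<in> borel_measurable config_space"
  shows "(\<integral>z. f (shift i z) \<partial>law) = (\<integral>z. f z \<partial>law)"
proof -
  have "(\<integral>z. f (shift i z) \<partial>law) = integral\<^sup>L (distr law config_space (shift i)) f"
    by (rule integral_distr[symmetric]) simp_all
  then show ?thesis by (simp add: distr_law_shift)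
qed

lemma measure_law_eq:
  assumes "S \<in> sets config_space"
  shows "measure law S = measure M {\<omega> \<in> space M. config_of \<omega> \<in> S}"
  using measure_distr[OF measurable_config_of assms] by (simp add: law_def vimage_def Int_commute Collect_conj_eq)

definition offspring_prob :: "nat \<Rightarrow> real" where
  "offspring_prob n = measure law {z. offspring z [] = n}"

lemma offspring_prob_sums: "offspring_prob sums 1"
proof -
  have "offspring_prob sums measure law (\<Union>n. {z. offspring z [] = n})"
    unfolding offspring_prob_def
    by (intro law.finite_measure_UNION) (auto simp: disjoint_family_on_def intro: sets_Collect_config)
  moreover have "(\<Union>n. {z. offspring z [] = n}) = space law" by auto
  ultimately show ?thesis using law.prob_space by simp
qed

lemma measure_offspring_eq_children_in:
  assumes [measurable]: "E \<in> sets config_space"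
  shows "measure law {z. offspring z [] = n \<and> (\<forall>i<n. shift i z \<in> E)} = offspring_prob n * measure law E ^ n"
proof -
  define H :: "nat option \<Rightarrow> config \<Rightarrow> real" where
    "H l = (case l of
       None \<Rightarrow> (\<lambda>z. indicator {n} (offspring z []))
     | Some i \<Rightarrow> (\<lambda>z. indicator E (shift i z)))" for l
  define K :: "nat option \<Rightarrow> coord set" where
    "K l = (case l of None \<Rightarrow> {Inl []} | Some i \<Rightarrow> range (shift_coord i))" for l
  define I where "I = insert None (Some ` {..<n})"
  note [measurable] = pred_shift_in[OF assms]
  have [measurable]: "H l \<in> borel_measurable config_space" for l
    by (cases l) (simp_all add: H_def)
  have indep_H: "law.indep_vars (\<lambda>_. borel) H I"
  proof (rule indep_vars_determined_by)
    show "disjoint_family_on K I"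
      by (auto simp: disjoint_family_on_def I_def K_def shift_coord_disjoint)
    show "determined_by (K l) (H l)" for l
      by (cases l) (simp_all add: H_def K_def determined_by_offspring_root determined_by_shift)
  qed simp
  have H_None: "(\<integral>z. H None z \<partial>law) = offspring_prob n"
  proof -
    have "H None = indicator {z. offspring z [] = n}"
      by (auto simp: H_def fun_eq_iff indicator_def)
    moreover have "{z. offspring z [] = n} \<in> sets config_space"
      by (rule sets_Collect_config) measurable
    ultimately show ?thesis by (simp add: offspring_prob_def)
  qed
  have H_Some: "(\<integral>z. H (Some i) z \<partial>law) = measure law E" for i
    using integral_shift[of "indicator E" i] by (simp add: H_def)
  define S where "S = {z. offspring z [] = n \<and> (\<forall>i<n. shift i z \<in> E)}"
  have prod_H: "(\<Prod>l\<in>I. H l z) = indicator S z" for z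
  proof (cases "z \<in> S")
    case True
    then show ?thesis by (auto simp: S_def I_def H_def intro!: prod.neutral)
  next
    case False
    then consider "offspring z [] \<noteq> n" | i where "i < n" "shift i z \<notin> E"
      by (auto simp: S_def)
    then have "\<exists>l\<in>I. H l z = 0"
    proof cases
      case 1
      then show ?thesis by (auto simp: I_def H_def)
    next
      case (2 i)
      then show ?thesis by (intro bexI[of _ "Some i"]) (auto simp: I_def H_def)
    qed
    with False show ?thesis by (simp add: I_def prod_zero)
  qed
  have "S \<in> sets config_space"
    unfolding S_def by (rule sets_Collect_config) measurable
  then have "measure law S = (\<integral>z. indicator S z \<partial>law)"
    by simp
  also have "\<dots> = (\<Prod>l\<in>I. \<integral>z. H l z \<partial>law)"
    unfolding prod_H[symmetric]
    by (intro law.indep_vars_lebesgue_integral[OF _ indep_H])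
       (simp_all add: I_def integrable_law_bounded[where B=1] H_def split: option.split)
  also have "\<dots> = (\<integral>z. H None z \<partial>law) * (\<Prod>i<n. \<integral>z. H (Some i) z \<partial>law)"
    by (simp add: I_def prod.reindex)
  also have "\<dots> = offspring_prob n * measure law E ^ n"
    by (simp add: H_None H_Some)
  finally show ?thesis by (simp add: S_def)
qed

lemma measure_children_in_sums:
  assumes [measurable]: "E \<in> sets config_space"
  shows "(\<lambda>n. offspring_prob n * measure law E ^ n) sums measure law {z. \<forall>i<offspring z []. shift i z \<in> E}"
proof -
  define S where "S n = {z. offspring z [] = n \<and> (\<forall>i<n. shift i z \<in> E)}" for n
  note [measurable] = pred_shift_in[OF assms]
  have "S n \<in> sets config_space" for n
    unfolding S_def by (rule sets_Collect_config) measurable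
  then have "(\<lambda>n. measure law (S n)) sums measure law (\<Union>n. S n)"
    by (intro law.finite_measure_UNION) (auto simp: S_def disjoint_family_on_def)
  moreover have "(\<Union>n. S n) = {z. \<forall>i<offspring z []. shift i z \<in> E}"
    by (auto simp: S_def)
  ultimately show ?thesis by (simp add: S_def measure_offspring_eq_children_in)
qed

lemma fixed_point_res_lim_cfg:
  "(\<lambda>n. offspring_prob n * measure law {z. res_lim_cfg e z = top} ^ n) sums measure law {z. res_lim_cfg e z = top}"
proof -
  have "{z. res_lim_cfg e z = top} \<in> sets config_space"
    by (rule sets_Collect_config) measurable
  from measure_children_in_sums[OF this] show ?thesis
    by (simp flip: res_lim_cfg_eq_top_iff)
qed

lemma fixed_point_extinct:
  "(\<lambda>n. offspring_prob n * measure law {z. extinct (offspring z)} ^ n) sums measure law {z. extinct (offspring z)}"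
proof -
  have "{z. extinct (offspring z)} \<in> sets config_space"
    by (rule sets_Collect_config) measurable
  from measure_children_in_sums[OF this] show ?thesis
    by (simp flip: extinct_iff_shift)
qed

end

section \<open>Fixed points of a generating function\<close>

lemma power_chord_slope_mono:
  fixes x y :: real
  assumes "0 \<le> x" "x < y" "y < 1"
  shows "0 \<le> (y - x) * (1 - y ^ n) - (1 - y) * (y ^ n - x ^ n)"
    and "2 \<le> n \<Longrightarrow> 0 < (y - x) * (1 - y ^ n) - (1 - y) * (y ^ n - x ^ n)"
proof -
  define D where "D = (\<Sum>i<n. y ^ (n - Suc i) - x ^ (n - Suc i) * y ^ i)"
  have term_nonneg: "0 \<le> y ^ (n - Suc i) - x ^ (n - Suc i) * y ^ i" for i
  proof -
    have "x ^ (n - Suc i) * y ^ i \<le> y ^ (n - Suc i) * 1"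
      using assms by (intro mult_mono power_mono power_le_one) auto
    then show ?thesis by simp
  qed
  have D_eq: "(y - x) * (1 - y ^ n) - (1 - y) * (y ^ n - x ^ n) = (y - x) * (1 - y) * D"
  proof -
    have geom_y: "1 - y ^ n = (1 - y) * (\<Sum>i<n. y ^ (n - Suc i))"
      using power_diff_sumr2[of 1 n y] by simp
    have geom_xy: "y ^ n - x ^ n = (y - x) * (\<Sum>i<n. x ^ (n - Suc i) * y ^ i)"
      using power_diff_sumr2[of y n x] by simp
    show ?thesis unfolding geom_y geom_xy D_def by (simp add: sum_subtractf algebra_simps)
  qed
  have "0 \<le> D"
    unfolding D_def by (intro sum_nonneg term_nonneg)
  with assms show "0 \<le> (y - x) * (1 - y ^ n) - (1 - y) * (y ^ n - x ^ n)"
    unfolding D_eq by simp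
  assume "2 \<le> n"
  have "0 < D"
    unfolding D_def
  proof (rule sum_pos2[where i="n - 1"])
    have "y ^ (n - 1) \<le> y ^ 1"
      using assms \<open>2 \<le> n\<close> by (intro power_decreasing) auto
    then show "0 < y ^ (n - Suc (n - 1)) - x ^ (n - Suc (n - 1)) * y ^ (n - 1)"
      using assms \<open>2 \<le> n\<close> by simp
  qed (use \<open>2 \<le> n\<close> term_nonneg in auto)
  with assms show "0 < (y - x) * (1 - y ^ n) - (1 - y) * (y ^ n - x ^ n)"
    unfolding D_eq by simp
qed

lemma power_series_fixed_point_not_less:
  fixes p :: "nat \<Rightarrow> real"
  assumes p: "p sums 1" "\<And>n. 0 \<le> p n" "2 \<le> m" "0 < p m"
    and x: "0 \<le> x" "(\<lambda>n. p n * x ^ n) sums x"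
    and y: "y < 1" "(\<lambda>n. p n * y ^ n) sums y"
  shows "\<not> x < y"
proof
  assume "x < y"
  define \<delta> where "\<delta> n = (y - x) * (1 - y ^ n) - (1 - y) * (y ^ n - x ^ n)" for n
  have "(\<lambda>n. (y - x) * (p n - p n * y ^ n) - (1 - y) * (p n * y ^ n - p n * x ^ n))
      sums ((y - x) * (1 - y) - (1 - y) * (y - x))"
    by (intro sums_diff sums_mult p(1) x(2) y(2))
  then have sums_0: "(\<lambda>n. p n * \<delta> n) sums 0"
    by (simp add: \<delta>_def algebra_simps)
  have "0 < (\<Sum>n. p n * \<delta> n)"
  proof (rule suminf_pos2[where i=m])
    show "summable (\<lambda>n. p n * \<delta> n)"
      using sums_0 by (rule sums_summable)
    show "0 \<le> p n * \<delta> n" for n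
      unfolding \<delta>_def using p(2) power_chord_slope_mono(1)[OF x(1) \<open>x < y\<close> y(1)] by simp
    show "0 < p m * \<delta> m"
      unfolding \<delta>_def using p(3,4) power_chord_slope_mono(2)[OF x(1) \<open>x < y\<close> y(1)] by simp
  qed
  with sums_0 show False by (simp add: sums_iff)
qed

lemma power_series_fixed_point_unique:
  fixes p :: "nat \<Rightarrow> real"
  assumes "p sums 1" "\<And>n. 0 \<le> p n" "2 \<le> m" "0 < p m"
    and "0 \<le> x" "x < 1" "(\<lambda>n. p n * x ^ n) sums x"
    and "0 \<le> y" "y < 1" "(\<lambda>n. p n * y ^ n) sums y"
  shows "x = y"
  using power_series_fixed_point_not_less[of p m x y] power_series_fixed_point_not_less[of p m y x] assms
  by fastforce

section \<open>Counting good vertices\<close>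

lemma parallel_resistance_le:
  fixes w :: "'i \<Rightarrow> real"
  assumes S: "finite S" "S \<noteq> {}" and w: "\<And>i. i \<in> S \<Longrightarrow> 0 < w i" and C: "0 < C" and X: "0 \<le> X"
  shows "inverse (\<Sum>i\<in>S. inverse (C + X / w i)) \<le> C + X / (\<Sum>i\<in>S. w i)"
proof -
  define W where "W = (\<Sum>i\<in>S. w i)"
  have "0 < W" unfolding W_def using S w by (intro sum_pos) auto
  have "w i / (C * W + X) \<le> inverse (C + X / w i)" if "i \<in> S" for i
  proof -
    have "w i \<le> W" unfolding W_def using S w that by (intro member_le_sum) (auto intro: less_imp_le)
    then have "w i / (C * W + X) \<le> w i / (C * w i + X)"
      using w[OF that] C X by (intro divide_left_mono mult_pos_pos add_pos_nonneg) auto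
    also have "\<dots> = inverse (C + X / w i)"
      using w[OF that] by (simp add: field_simps)
    finally show ?thesis .
  qed
  then have "(\<Sum>i\<in>S. w i / (C * W + X)) \<le> (\<Sum>i\<in>S. inverse (C + X / w i))"
    by (rule sum_mono)
  then have "W / (C * W + X) \<le> (\<Sum>i\<in>S. inverse (C + X / w i))"
    by (simp add: W_def sum_divide_distrib)
  moreover have "0 < C * W + X"
    using \<open>0 < W\<close> C X by (intro add_pos_nonneg) simp_all
  then have "W / (C * W + X) = inverse (C + X / W)"
    using \<open>0 < W\<close> by (simp add: field_simps)
  moreover have "0 < C + X / W"
    using \<open>0 < W\<close> C X by (intro add_pos_nonneg) simp_all
  ultimately have "inverse (\<Sum>i\<in>S. inverse (C + X / w i)) \<le> inverse (inverse (C + X / W))"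
    by (intro le_imp_inverse_le) simp_all
  then show ?thesis by (simp add: W_def)
qed

fun good_count :: "nat \<Rightarrow> real \<Rightarrow> real \<Rightarrow> real \<Rightarrow> nat \<Rightarrow> nat \<Rightarrow> config \<Rightarrow> nat" where
  "good_count C L e X n 0 z = (if res_cfg e n z \<le> ennreal X then 1 else 0)"
| "good_count C L e X n (Suc k) z = (\<Sum>i<C.
     if i < offspring z [] \<and> edge_res (shift i z) [] \<le> L then good_count C L e X n k (shift i z) else 0)"

lemma measurable_good_count [measurable]:
  "(\<lambda>z. real (good_count C L e X n k z)) \<in> borel_measurable config_space"
proof (induction k)
  case 0
  have "(\<lambda>z. if res_cfg e n z \<le> ennreal X then 1 else 0 :: real) \<in> borel_measurable config_space"
    by measurable
  then show ?case by (simp add: if_distrib)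
next
  case (Suc k)
  note [measurable] = Suc.IH
  have "(\<lambda>z. \<Sum>i<C. if i < offspring z [] \<and> edge_res (shift i z) [] \<le> L
      then real (good_count C L e X n k (shift i z)) else 0) \<in> borel_measurable config_space"
    by measurable
  then show ?case by (simp add: of_nat_sum if_distrib)
qed

lemma good_count_le: "good_count C L e X n k z \<le> C ^ k"
proof (induction k arbitrary: z)
  case (Suc k)
  have "good_count C L e X n (Suc k) z \<le> (\<Sum>i<C. C ^ k)"
    unfolding good_count.simps by (intro sum_mono) (auto intro: Suc.IH)
  then show ?case by simp
qed simp

lemma determined_by_good_count: "determined_by (- {Inr []}) (good_count C L e X n k)"
proof -
  have "good_count C L e X n k z = good_count C L e X n k z'" if "\<forall>j\<in>- {Inr []}. z j = z' j" for z z'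
  proof (cases k)
    case 0
    have "res_cfg e n z = res_cfg e n z'"
      using determined_by_res_cfg[of e n] that unfolding determined_by_def by blast
    then show ?thesis using 0 by simp
  next
    case (Suc k')
    have "shift i z = shift i z'" for i by (rule shift_eqI) (use that in auto)
    moreover have "offspring z [] = offspring z' []" using that by (simp add: offspring_def)
    ultimately show ?thesis using Suc by (simp cong: if_cong)
  qed
  then show ?thesis by (simp add: determined_by_def)
qed

lemma res_cfg_Suc_le_parallel:
  assumes S: "finite S" "S \<noteq> {}" "S \<subseteq> {..<offspring z []}" and b: "\<And>i. i \<in> S \<Longrightarrow> 0 < b i"
    and branch: "\<And>i. i \<in> S \<Longrightarrow>
      ennreal (edge_res (shift i z) [] + e) + res_cfg e m (shift i z) \<le> ennreal (b i)"
  shows "res_cfg e (Suc m) z \<le> ennreal (inverse (\<Sum>i\<in>S. inverse (b i)))"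
proof -
  define f where "f i = inverse (ennreal (edge_res (shift i z) [] + e) + res_cfg e m (shift i z))" for i
  have "ennreal (inverse (b i)) \<le> f i" if "i \<in> S" for i
    using ennreal_inverse_antimono[OF branch[OF that]] b[OF that] by (simp add: f_def inverse_ennreal)
  then have "(\<Sum>i\<in>S. ennreal (inverse (b i))) \<le> (\<Sum>i\<in>S. f i)"
    by (rule sum_mono)
  then have "ennreal (\<Sum>i\<in>S. inverse (b i)) \<le> (\<Sum>i\<in>S. f i)"
    using b by (simp add: sum_ennreal less_imp_le)
  also have "\<dots> \<le> (\<Sum>i<offspring z []. f i)"
    using S by (intro sum_mono2) auto
  finally have "res_cfg e (Suc m) z \<le> inverse (ennreal (\<Sum>i\<in>S. inverse (b i)))"
    by (simp add: res_cfg_Suc f_def ennreal_inverse_antimono)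
  also have "\<dots> = ennreal (inverse (\<Sum>i\<in>S. inverse (b i)))"
    using S b by (intro inverse_ennreal sum_pos) auto
  finally show ?thesis .
qed

lemma res_cfg_le_good_count:
  assumes e: "0 < e" and L: "0 \<le> L" and X: "0 \<le> X" and good: "1 \<le> good_count C L e X n k z"
  shows "res_cfg e (n + k) z \<le> ennreal (real k * (L + e) + X / real (good_count C L e X n k z))"
  using good
proof (induction k arbitrary: z)
  case (Suc k)
  define G where "G i = good_count C L e X n k (shift i z)" for i
  define S where "S = {i \<in> {..<C}. i < offspring z [] \<and> edge_res (shift i z) [] \<le> L \<and> 1 \<le> G i}"
  define b where "b i = real (Suc k) * (L + e) + X / real (G i)" for i
  have "finite S" by (simp add: S_def)
  have count_eq: "good_count C L e X n (Suc k) z = (\<Sum>i\<in>S. G i)"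
  proof -
    have "good_count C L e X n (Suc k) z
        = (\<Sum>i\<in>{i \<in> {..<C}. i < offspring z [] \<and> edge_res (shift i z) [] \<le> L}. G i)"
      unfolding G_def by (simp add: sum.inter_filter[symmetric] cong: if_cong)
    also have "\<dots> = (\<Sum>i\<in>S. G i)"
      by (rule sum.mono_neutral_right) (auto simp: S_def)
    finally show ?thesis .
  qed
  with Suc.prems have "S \<noteq> {}" by auto
  have b_pos: "0 < b i" for i
    unfolding b_def using e L X by (intro add_pos_nonneg) auto
  have "ennreal (edge_res (shift i z) [] + e) + res_cfg e (n + k) (shift i z) \<le> ennreal (b i)"
    if "i \<in> S" for i
  proof -
    have "ennreal (edge_res (shift i z) [] + e) \<le> ennreal (L + e)"
      using that by (intro ennreal_leI) (simp add: S_def)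
    moreover have "res_cfg e (n + k) (shift i z) \<le> ennreal (real k * (L + e) + X / real (G i))"
      using Suc.IH[of "shift i z"] that by (simp add: S_def G_def)
    ultimately have "ennreal (edge_res (shift i z) [] + e) + res_cfg e (n + k) (shift i z)
        \<le> ennreal (L + e) + ennreal (real k * (L + e) + X / real (G i))"
      by (rule add_mono)
    also have "\<dots> = ennreal (L + e + (real k * (L + e) + X / real (G i)))"
      using e L X by (intro ennreal_plus[symmetric]) auto
    also have "L + e + (real k * (L + e) + X / real (G i)) = b i"
      by (simp add: b_def algebra_simps)
    finally show ?thesis .
  qed
  then have "res_cfg e (Suc (n + k)) z \<le> ennreal (inverse (\<Sum>i\<in>S. inverse (b i)))"
    using \<open>finite S\<close> \<open>S \<noteq> {}\<close> b_pos by (intro res_cfg_Suc_le_parallel) (auto simp: S_def)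
  also have "\<dots> \<le> ennreal (real (Suc k) * (L + e) + X / (\<Sum>i\<in>S. real (G i)))"
    unfolding b_def using \<open>finite S\<close> \<open>S \<noteq> {}\<close> e L X
    by (intro ennreal_leI parallel_resistance_le) (auto simp: S_def)
  finally show ?case unfolding count_eq by simp
qed (simp split: if_splits)

lemma res_cfg_le_if_good_count_ge_2:
  assumes "0 < e" "0 \<le> L" and good: "2 \<le> good_count C L e (2 * real k * (L + e)) n k z"
  shows "res_cfg e (n + k) z \<le> ennreal (2 * real k * (L + e))"
proof -
  define X where "X = 2 * real k * (L + e)"
  have "0 \<le> X" using assms by (simp add: X_def)
  have "res_cfg e (n + k) z \<le> ennreal (real k * (L + e) + X / real (good_count C L e X n k z))"
    using res_cfg_le_good_count[OF assms(1,2) \<open>0 \<le> X\<close>] good by (simp add: X_def)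
  also have "\<dots> \<le> ennreal (real k * (L + e) + X / 2)"
    using good \<open>0 \<le> X\<close> by (intro ennreal_leI add_left_mono divide_left_mono) (auto simp: X_def)
  also have "real k * (L + e) + X / 2 = X" by (simp add: X_def)
  finally show ?thesis by (simp add: X_def)
qed

section \<open>Moments of the good count\<close>

lemma (in prob_space) expectation_le_threshold:
  fixes f :: "'a \<Rightarrow> real"
  assumes f_int: "integrable M f" and f2_int: "integrable M (\<lambda>x. f x ^ 2)" and "0 \<le> c" "0 < t"
  shows "expectation f \<le> c + t / 2 * expectation (\<lambda>x. f x ^ 2) + prob {x \<in> space M. c < f x} / (2 * t)"
proof -
  define A where "A = {x \<in> space M. c < f x}"
  have [measurable]: "f \<in> borel_measurable M" using f_int by simp
  have A_sets: "A \<in> sets M" unfolding A_def by measurable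
  have A_int: "integrable M (indicator A :: 'a \<Rightarrow> real)"
    using A_sets by (simp add: emeasure_eq_measure)
  have "f x \<le> c + t / 2 * f x ^ 2 + indicator A x / (2 * t)" if "x \<in> space M" for x
  proof (cases "x \<in> A")
    case True
    have "0 \<le> (t * f x - 1) ^ 2 / (2 * t)" using \<open>0 < t\<close> by simp
    also have "\<dots> = t / 2 * f x ^ 2 + 1 / (2 * t) - f x"
      using \<open>0 < t\<close> by (simp add: power2_eq_square field_simps)
    finally show ?thesis using True \<open>0 \<le> c\<close> by simp
  next
    case False
    have "0 \<le> t / 2 * f x ^ 2" using \<open>0 < t\<close> by simp
    with False that show ?thesis by (simp add: A_def)
  qed
  moreover have "integrable M (\<lambda>x. c + t / 2 * f x ^ 2 + indicator A x / (2 * t))"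
    using f2_int A_int by (intro Bochner_Integration.integrable_add integrable_mult_right integrable_divide) auto
  ultimately have "expectation f \<le> (\<integral>x. c + t / 2 * f x ^ 2 + indicator A x / (2 * t) \<partial>M)"
    using f_int by (intro integral_mono) auto
  also have "\<dots> = c + t / 2 * expectation (\<lambda>x. f x ^ 2) + prob A / (2 * t)"
    using f2_int A_int A_sets by (simp add: prob_space)
  finally show ?thesis by (simp add: A_def)
qed

lemma (in prob_space) paley_zygmund:
  fixes f :: "'a \<Rightarrow> real"
  assumes f_int: "integrable M f" and f2_int: "integrable M (\<lambda>x. f x ^ 2)"
    and f_nonneg: "\<And>x. x \<in> space M \<Longrightarrow> 0 \<le> f x"
  shows "expectation f ^ 2 / (4 * expectation (\<lambda>x. f x ^ 2)) \<le> prob {x \<in> space M. expectation f / 2 < f x}"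
proof -
  define m where "m = expectation f"
  define v where "v = expectation (\<lambda>x. f x ^ 2)"
  define p where "p = prob {x \<in> space M. m / 2 < f x}"
  have "0 \<le> m" unfolding m_def using f_nonneg by (intro integral_nonneg_AE) auto
  have "0 \<le> v" unfolding v_def by simp
  show ?thesis
  proof (cases "v = 0 \<or> m = 0")
    case False
    with \<open>0 \<le> m\<close> \<open>0 \<le> v\<close> have "0 < m" "0 < v" by auto
    then have "m \<le> m / 2 + m / (2 * v) / 2 * v + p / (2 * (m / (2 * v)))"
      using expectation_le_threshold[OF f_int f2_int, of "m / 2" "m / (2 * v)"]
      by (simp add: m_def v_def p_def)
    with \<open>0 < m\<close> \<open>0 < v\<close> have "m ^ 2 / (4 * v) \<le> p"
      by (simp add: field_simps power2_eq_square)
    then show ?thesis by (simp add: m_def v_def p_def)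
  qed (auto simp flip: m_def v_def)
qed

lemma le_ratio_of_moments:
  fixes b m :: real
  assumes "0 \<le> b" "4 \<le> m"
  shows "1 / (8 * b + 8) \<le> m ^ 2 / (4 * (m + b * m ^ 2))"
proof -
  have "4 * m \<le> m ^ 2"
    using assms(2) mult_right_mono[OF assms(2), of m] by (simp add: power2_eq_square)
  moreover have "0 \<le> b * m ^ 2" "0 \<le> m ^ 2" using assms(1) by simp_all
  moreover have "4 * (m + b * m ^ 2) = 4 * m + 4 * (b * m ^ 2)"
    and "m ^ 2 * (8 * b + 8) = 8 * (b * m ^ 2) + 8 * m ^ 2"
    by (simp_all add: algebra_simps)
  ultimately have "4 * (m + b * m ^ 2) \<le> m ^ 2 * (8 * b + 8)"
    by linarith
  moreover have "0 < 4 * (m + b * m ^ 2)" "0 < 8 * b + 8"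
    using assms by (simp_all add: add_pos_nonneg)
  ultimately show ?thesis
    by (simp add: divide_simps mult.commute)
qed

lemma sum_square_le_diagonal_plus_off_diagonal:
  fixes x y :: "nat \<Rightarrow> real"
  assumes x: "\<And>i. x i = 0 \<or> x i = 1" and y: "\<And>i. 0 \<le> y i"
  shows "(\<Sum>i<n. x i * y i) ^ 2 \<le> (\<Sum>i<n. x i * y i ^ 2) + (\<Sum>i<n. \<Sum>j<n. if i = j then 0 else y i * y j)"
proof -
  define a where "a i = x i * y i" for i
  have "(\<Sum>i<n. x i * y i) ^ 2 = (\<Sum>i<n. \<Sum>j<n. a i * a j)"
    by (simp add: a_def power2_eq_square sum_product)
  also have "\<dots> = (\<Sum>i<n. \<Sum>j<n. (if i = j then a i * a j else 0) + (if i = j then 0 else a i * a j))"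
    by (intro sum.cong refl) auto
  also have "\<dots> = (\<Sum>i<n. a i * a i) + (\<Sum>i<n. \<Sum>j<n. if i = j then 0 else a i * a j)"
    by (simp add: sum.distrib)
  also have "(\<Sum>i<n. a i * a i) = (\<Sum>i<n. x i * y i ^ 2)"
    by (intro sum.cong refl) (use x in \<open>auto simp: a_def power2_eq_square\<close>)
  also have "(\<Sum>i<n. \<Sum>j<n. if i = j then 0 else a i * a j) \<le> (\<Sum>i<n. \<Sum>j<n. if i = j then 0 else y i * y j)"
  proof (intro sum_mono)
    fix i j
    have "a i * a j \<le> y i * y j"
      using x[of i] x[of j] y[of i] y[of j] by (auto simp: a_def)
    then show "(if i = j then 0 else a i * a j) \<le> (if i = j then 0 else y i * y j)" by simp
  qed
  finally show ?thesis by simp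
qed

context bgw_tree
begin

lemma integral_if_law:
  assumes "Measurable.pred config_space P"
  shows "(\<integral>z. (if P z then 1 else 0) \<partial>law) = measure law {z. P z}"
proof -
  have "(\<lambda>z. if P z then 1 else 0 :: real) = indicator {z. P z}"
    by (auto simp: indicator_def)
  with sets_Collect_config[OF assms] show ?thesis by simp
qed

definition prob_edge_le :: "real \<Rightarrow> real" where
  "prob_edge_le L = measure law {z. edge_res z [] \<le> L}"

definition capped_mean :: "nat \<Rightarrow> real" where
  "capped_mean C = (\<integral>z. real (min (offspring z []) C) \<partial>law)"

definition good_mean :: "nat \<Rightarrow> real \<Rightarrow> real" where
  "good_mean C L = capped_mean C * prob_edge_le L"

lemma sum_prob_child_eq_capped_mean: "(\<Sum>i<C. measure law {z. i < offspring z []}) = capped_mean C"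
proof -
  have "(\<Sum>i<C. measure law {z. i < offspring z []}) = (\<Sum>i<C. \<integral>z. (if i < offspring z [] then 1 else 0) \<partial>law)"
    by (simp add: integral_if_law)
  also have "\<dots> = (\<integral>z. (\<Sum>i<C. if i < offspring z [] then 1 else 0) \<partial>law)"
    by (rule Bochner_Integration.integral_sum[symmetric]) (simp add: integrable_law_bounded[where B=1])
  also have "(\<lambda>z. \<Sum>i<C. if i < offspring z [] then 1 else 0 :: real) = (\<lambda>z. real (min (offspring z []) C))"
  proof
    fix z
    have "{i. i < C \<and> i < offspring z []} = {..<min (offspring z []) C}" by auto
    then show "(\<Sum>i<C. if i < offspring z [] then 1 else 0 :: real) = real (min (offspring z []) C)"
      by (simp add: sum.inter_filter[symmetric])
  qed
  finally show ?thesis by (simp add: capped_mean_def)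
qed

lemma integral_edge_indicator_mult:
  fixes F :: "config \<Rightarrow> real"
  assumes [measurable]: "F \<in> borel_measurable config_space"
    and "\<And>z. \<bar>F z\<bar> \<le> B" and "determined_by (- {Inr []}) F"
  shows "(\<integral>z. (if edge_res z [] \<le> L then 1 else 0) * F z \<partial>law) = prob_edge_le L * (\<integral>z. F z \<partial>law)"
proof -
  have "(\<integral>z. (if edge_res z [] \<le> L then 1 else 0) * F z \<partial>law)
      = (\<integral>z. (if edge_res z [] \<le> L then 1 else 0) \<partial>law) * (\<integral>z. F z \<partial>law)"
    using assms determined_by_edge_res_root[of "\<lambda>r. if r \<le> L then 1 else 0 :: real"]
    by (intro integral_mult_determined_by[where A="{Inr []}" and B="- {Inr []}"])
       (auto intro: integrable_law_bounded[where B=1] integrable_law_bounded[where B=B])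
  then show ?thesis by (simp add: integral_if_law prob_edge_le_def)
qed

lemma integral_child_indicator_mult_shift:
  fixes G :: "config \<Rightarrow> real"
  assumes [measurable]: "G \<in> borel_measurable config_space" and "\<And>z. \<bar>G z\<bar> \<le> B"
  shows "(\<integral>z. (if i < offspring z [] then 1 else 0) * G (shift i z) \<partial>law)
    = measure law {z. i < offspring z []} * (\<integral>z. G z \<partial>law)"
proof -
  have "(\<integral>z. (if i < offspring z [] then 1 else 0) * G (shift i z) \<partial>law)
      = (\<integral>z. (if i < offspring z [] then 1 else 0) \<partial>law) * (\<integral>z. G (shift i z) \<partial>law)"
    using assms determined_by_offspring_root[of "\<lambda>m. if i < m then 1 else 0 :: real"] determined_by_shift
    by (intro integral_mult_determined_by[where A="{Inl []}" and B="range (shift_coord i)"])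
       (auto intro: integrable_law_bounded[where B=1] integrable_law_bounded[where B=B])
  then show ?thesis by (simp add: integral_if_law integral_shift)
qed

lemma integral_shift_mult_shift:
  fixes G :: "config \<Rightarrow> real"
  assumes [measurable]: "G \<in> borel_measurable config_space" and "\<And>z. \<bar>G z\<bar> \<le> B" and "i \<noteq> j"
  shows "(\<integral>z. G (shift i z) * G (shift j z) \<partial>law) = (\<integral>z. G z \<partial>law) ^ 2"
proof -
  have "(\<integral>z. G (shift i z) * G (shift j z) \<partial>law) = (\<integral>z. G (shift i z) \<partial>law) * (\<integral>z. G (shift j z) \<partial>law)"
    using assms determined_by_shift shift_coord_disjoint
    by (intro integral_mult_determined_by[where A="range (shift_coord i)" and B="range (shift_coord j)"])
       (auto intro: integrable_law_bounded[where B=B])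
  then show ?thesis by (simp add: integral_shift power2_eq_square)
qed

context
  fixes C :: nat and L e X :: real and n :: nat
begin

definition W :: "nat \<Rightarrow> config \<Rightarrow> real" where
  "W k z = real (good_count C L e X n k z)"

definition W_edge :: "nat \<Rightarrow> config \<Rightarrow> real" where
  "W_edge k z = (if edge_res z [] \<le> L then 1 else 0) * W k z"

lemma measurable_W [measurable]: "W k \<in> borel_measurable config_space"
  unfolding W_def[abs_def] by measurable

lemma measurable_W_edge [measurable]: "W_edge k \<in> borel_measurable config_space"
  unfolding W_edge_def[abs_def] by measurable

lemma W_nonneg: "0 \<le> W k z"
  by (simp add: W_def)

lemma W_le: "W k z \<le> real C ^ k"
  using good_count_le[of C L e X n k z] unfolding W_def by (metis of_nat_le_iff of_nat_power)

lemma W_edge_nonneg: "0 \<le> W_edge k z"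
  by (simp add: W_edge_def W_nonneg)

lemma W_edge_le: "W_edge k z \<le> real C ^ k"
  using W_le[of k z] W_nonneg[of k z] by (simp add: W_edge_def)

lemma abs_power_W_le: "\<bar>W k z ^ p\<bar> \<le> (real C ^ k) ^ p"
  using W_le W_nonneg by (simp add: power_mono)

lemma abs_power_W_edge_le: "\<bar>W_edge k z ^ p\<bar> \<le> (real C ^ k) ^ p"
  using W_edge_le W_edge_nonneg by (simp add: power_mono)

lemma integrable_power_W: "integrable law (\<lambda>z. W k z ^ p)"
  by (rule integrable_law_bounded[OF _ abs_power_W_le]) simp

lemma integrable_W: "integrable law (W k)"
  using integrable_power_W[of k 1] by simp

lemma W_Suc: "W (Suc k) z = (\<Sum>i<C. (if i < offspring z [] then 1 else 0) * W_edge k (shift i z))"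
  unfolding W_def W_edge_def by (auto simp: of_nat_sum intro!: sum.cong)

lemma integral_power_W_edge:
  assumes "0 < p"
  shows "(\<integral>z. W_edge k z ^ p \<partial>law) = prob_edge_le L * (\<integral>z. W k z ^ p \<partial>law)"
proof -
  have "W_edge k z ^ p = (if edge_res z [] \<le> L then 1 else 0) * W k z ^ p" for z
    using assms by (simp add: W_edge_def)
  moreover have "determined_by (- {Inr []}) (\<lambda>z. W k z ^ p)"
    unfolding W_def by (rule determined_by_comp[OF determined_by_good_count])
  ultimately show ?thesis
    using integral_edge_indicator_mult[OF _ abs_power_W_le] by simp
qed

lemma integral_child_W_edge_power:
  assumes "0 < p"
  shows "(\<Sum>i<C. \<integral>z. (if i < offspring z [] then 1 else 0) * W_edge k (shift i z) ^ p \<partial>law)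
    = good_mean C L * (\<integral>z. W k z ^ p \<partial>law)"
proof -
  have "(\<integral>z. (if i < offspring z [] then 1 else 0) * W_edge k (shift i z) ^ p \<partial>law)
      = measure law {z. i < offspring z []} * (\<integral>z. W_edge k z ^ p \<partial>law)" for i
    by (rule integral_child_indicator_mult_shift[OF _ abs_power_W_edge_le]) simp
  then show ?thesis
    by (simp add: integral_power_W_edge[OF assms] sum_distrib_right[symmetric]
        sum_prob_child_eq_capped_mean good_mean_def)
qed

lemma integral_W_Suc:
  "(\<integral>z. W (Suc k) z \<partial>law) = good_mean C L * (\<integral>z. W k z \<partial>law)"
proof -
  have "(\<integral>z. W (Suc k) z \<partial>law) = (\<Sum>i<C. \<integral>z. (if i < offspring z [] then 1 else 0) * W_edge k (shift i z) \<partial>law)"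
    unfolding W_Suc
    by (intro Bochner_Integration.integral_sum integrable_law_bounded[where B="real C ^ k"])
       (use W_edge_nonneg W_edge_le in auto)
  then show ?thesis
    using integral_child_W_edge_power[of 1 k] by simp
qed

lemma integral_W:
  "(\<integral>z. W k z \<partial>law) = (good_mean C L) ^ k * measure law {z. res_cfg e n z \<le> ennreal X}"
proof (induction k)
  case 0
  have "W 0 = (\<lambda>z. if res_cfg e n z \<le> ennreal X then 1 else 0)"
    by (auto simp: W_def)
  then show ?case by (simp add: integral_if_law)
next
  case (Suc k)
  then show ?case by (simp add: integral_W_Suc)
qed

lemma integral_W_edge_off_diagonal_le:
  "(\<integral>z. (if i = j then 0 else W_edge k (shift i z) * W_edge k (shift j z)) \<partial>law) \<le> (\<integral>z. W k z \<partial>law) ^ 2"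
proof (cases "i = j")
  case False
  have "prob_edge_le L ^ 2 \<le> 1"
    by (simp add: prob_edge_le_def power_le_one)
  then have "(\<integral>z. W_edge k z \<partial>law) ^ 2 \<le> (\<integral>z. W k z \<partial>law) ^ 2"
    using integral_power_W_edge[of 1 k] by (simp add: power_mult_distrib mult_left_le_one_le)
  moreover have "(\<integral>z. W_edge k (shift i z) * W_edge k (shift j z) \<partial>law) = (\<integral>z. W_edge k z \<partial>law) ^ 2"
    using W_edge_le W_edge_nonneg False
    by (intro integral_shift_mult_shift[where B="real C ^ k"]) auto
  ultimately show ?thesis
    using False by simp
qed simp

lemma integral_W_square_Suc_le:
  "(\<integral>z. W (Suc k) z ^ 2 \<partial>law)
    \<le> good_mean C L * (\<integral>z. W k z ^ 2 \<partial>law) + real C ^ 2 * (\<integral>z. W k z \<partial>law) ^ 2"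
proof -
  define diag where "diag i z = (if i < offspring z [] then 1 else 0) * W_edge k (shift i z) ^ 2" for i z
  define off where "off i j z = (if i = j then 0 else W_edge k (shift i z) * W_edge k (shift j z))" for i j z
  have int_diag: "integrable law (diag i)" for i
    unfolding diag_def using abs_power_W_edge_le[of k _ 2]
    by (intro integrable_law_bounded[where B="(real C ^ k) ^ 2"]) auto
  have int_off: "integrable law (off i j)" for i j
    unfolding off_def using W_edge_le W_edge_nonneg
    by (intro integrable_law_bounded[where B="(real C ^ k) ^ 2"])
       (auto simp: power2_eq_square intro: mult_mono)
  have "(\<integral>z. W (Suc k) z ^ 2 \<partial>law) \<le> (\<integral>z. (\<Sum>i<C. diag i z) + (\<Sum>i<C. \<Sum>j<C. off i j z) \<partial>law)"
  proof (rule integral_mono)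
    show "W (Suc k) z ^ 2 \<le> (\<Sum>i<C. diag i z) + (\<Sum>i<C. \<Sum>j<C. off i j z)" for z
      unfolding W_Suc diag_def off_def
      by (rule sum_square_le_diagonal_plus_off_diagonal) (simp_all add: W_edge_nonneg)
  qed (simp_all add: integrable_power_W int_diag int_off)
  also have "\<dots> = (\<Sum>i<C. \<integral>z. diag i z \<partial>law) + (\<Sum>i<C. \<Sum>j<C. \<integral>z. off i j z \<partial>law)"
    using int_diag int_off by simp
  also have "\<dots> \<le> good_mean C L * (\<integral>z. W k z ^ 2 \<partial>law) + (\<Sum>i<C. \<Sum>j<C. (\<integral>z. W k z \<partial>law) ^ 2)"
    unfolding diag_def off_def
    by (intro add_mono sum_mono integral_W_edge_off_diagonal_le) (simp add: integral_child_W_edge_power)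
  finally show ?thesis
    by (simp add: power2_eq_square)
qed

lemma integral_W_square_le:
  defines "\<mu> \<equiv> good_mean C L"
    and "g \<equiv> measure law {z. res_cfg e n z \<le> ennreal X}"
  assumes "1 < \<mu>"
  shows "(\<integral>z. W k z ^ 2 \<partial>law) \<le> \<mu> ^ k * g + real C ^ 2 / (\<mu> * (\<mu> - 1)) * (\<mu> ^ k * g) ^ 2"
proof (induction k)
  case 0
  have "W 0 z ^ 2 = W 0 z" for z by (simp add: W_def)
  then show ?case
    using integral_W[of 0] \<open>1 < \<mu>\<close> by (simp add: g_def)
next
  case (Suc k)
  define b where "b = real C ^ 2 / (\<mu> * (\<mu> - 1))"
  have C_eq: "real C ^ 2 = b * \<mu> * (\<mu> - 1)"
    using \<open>1 < \<mu>\<close> by (simp add: b_def)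
  have "(\<integral>z. W (Suc k) z ^ 2 \<partial>law) \<le> \<mu> * (\<integral>z. W k z ^ 2 \<partial>law) + real C ^ 2 * (\<mu> ^ k * g) ^ 2"
    using integral_W_square_Suc_le[of k] integral_W[of k] by (simp add: \<mu>_def g_def)
  also have "\<dots> \<le> \<mu> * (\<mu> ^ k * g + b * (\<mu> ^ k * g) ^ 2) + real C ^ 2 * (\<mu> ^ k * g) ^ 2"
    using Suc.IH \<open>1 < \<mu>\<close> by (simp add: b_def)
  also have "\<dots> = \<mu> ^ Suc k * g + b * (\<mu> ^ Suc k * g) ^ 2"
    unfolding C_eq by (simp add: power2_eq_square algebra_simps)
  finally show ?case by (simp add: b_def)
qed

end

section \<open>Finite resistance with positive probability\<close>

lemma prob_res_cfg_block_step:
  fixes C k n :: nat and L e :: real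
  defines "s \<equiv> 1 / (8 * (real C ^ 2 / (good_mean C L * (good_mean C L - 1))) + 8)"
    and "X \<equiv> 2 * real k * (L + e)"
  assumes "0 < e" "0 \<le> L" "1 < good_mean C L"
    and k_large: "4 \<le> good_mean C L ^ k * s"
    and start: "s \<le> measure law {z. res_cfg e n z \<le> ennreal X}"
  shows "s \<le> measure law {z. res_cfg e (n + k) z \<le> ennreal X}"
proof -
  define b where "b = real C ^ 2 / (good_mean C L * (good_mean C L - 1))"
  define m1 where "m1 = (\<integral>z. W C L e X n k z \<partial>law)"
  define m2 where "m2 = (\<integral>z. W C L e X n k z ^ 2 \<partial>law)"
  have "0 \<le> b" unfolding b_def using \<open>1 < good_mean C L\<close> by simp
  have m1_eq: "m1 = good_mean C L ^ k * measure law {z. res_cfg e n z \<le> ennreal X}"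
    unfolding m1_def by (rule integral_W)
  then have "good_mean C L ^ k * s \<le> m1"
    using start \<open>1 < good_mean C L\<close> by (simp add: mult_left_mono)
  with k_large have "4 \<le> m1" by simp
  have "m2 \<le> m1 + b * m1 ^ 2"
    using integral_W_square_le[where C=C and L=L and e=e and X=X and n=n and k=k] \<open>1 < good_mean C L\<close>
    unfolding m1_eq m2_def b_def by simp
  moreover have "m1 \<le> m2"
    unfolding m1_def m2_def
  proof (rule integral_mono)
    show "W C L e X n k z \<le> W C L e X n k z ^ 2" for z
      by (cases "good_count C L e X n k z") (simp_all add: W_def power2_eq_square)
  qed (simp_all add: integrable_W integrable_power_W)
  ultimately have "s \<le> m1 ^ 2 / (4 * m2)"
    using le_ratio_of_moments[OF \<open>0 \<le> b\<close> \<open>4 \<le> m1\<close>] \<open>4 \<le> m1\<close>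
    by (simp add: s_def b_def order_trans[OF _ divide_left_mono])
  also have "\<dots> \<le> measure law {z. m1 / 2 < W C L e X n k z}"
    unfolding m1_def m2_def
    using law.paley_zygmund[OF integrable_W integrable_power_W] W_nonneg by simp
  also have "\<dots> \<le> measure law {z. res_cfg e (n + k) z \<le> ennreal X}"
  proof (rule law.finite_measure_mono)
    show "{z. m1 / 2 < W C L e X n k z} \<subseteq> {z. res_cfg e (n + k) z \<le> ennreal X}"
    proof safe
      fix z assume "m1 / 2 < W C L e X n k z"
      with \<open>4 \<le> m1\<close> have "2 \<le> good_count C L e X n k z" by (simp add: W_def)
      then show "res_cfg e (n + k) z \<le> ennreal X"
        unfolding X_def using \<open>0 < e\<close> \<open>0 \<le> L\<close> by (intro res_cfg_le_if_good_count_ge_2)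
    qed
  qed (simp add: sets_Collect_config)
  finally show ?thesis .
qed

lemma prob_res_lim_cfg_bounded_ge:
  fixes C k :: nat and L e :: real
  defines "s \<equiv> 1 / (8 * (real C ^ 2 / (good_mean C L * (good_mean C L - 1))) + 8)"
  assumes "0 < e" "0 \<le> L" "1 < good_mean C L" "1 \<le> k" "4 \<le> good_mean C L ^ k * s"
  shows "s \<le> measure law {z. res_lim_cfg e z \<le> ennreal (2 * real k * (L + e))}"
proof -
  define X where "X = 2 * real k * (L + e)"
  define A where "A j = {z. res_cfg e (j * k) z \<le> ennreal X}" for j
  have A_sets: "A j \<in> sets law" for j
    unfolding A_def by (simp add: sets_Collect_config)
  have "s \<le> measure law (A j)" for j
  proof (induction j)
    case 0
    have "0 \<le> real C ^ 2 / (good_mean C L * (good_mean C L - 1))" using \<open>1 < good_mean C L\<close> by simp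
    then have "s \<le> 1" unfolding s_def by (simp add: divide_le_eq_1)
    then show ?case using law.prob_space by (simp add: A_def res_cfg_def)
  next
    case (Suc j)
    then show ?case
      using prob_res_cfg_block_step[of e L C k "j * k"] assms
      by (simp add: A_def X_def add.commute)
  qed
  moreover have "decseq A"
    unfolding A_def decseq_def by (auto intro: order_trans[OF res_cfg_mono] mult_le_mono1)
  then have "(\<lambda>j. measure law (A j)) \<longlonglongrightarrow> measure law (\<Inter>j. A j)"
    using A_sets by (intro law.finite_Lim_measure_decseq) auto
  ultimately have "s \<le> measure law (\<Inter>j. A j)"
    by (intro LIMSEQ_le_const) auto
  also have "(\<Inter>j. A j) = {z. res_lim_cfg e z \<le> ennreal X}"
  proof safe
    fix z assume "z \<in> (\<Inter>j. A j)"
    have "res_cfg e m z \<le> ennreal X" for m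
    proof -
      have "res_cfg e m z \<le> res_cfg e (m * k) z"
        using \<open>1 \<le> k\<close> by (intro res_cfg_mono) simp
      also have "\<dots> \<le> ennreal X"
        using \<open>z \<in> (\<Inter>j. A j)\<close> by (simp add: A_def)
      finally show ?thesis .
    qed
    then show "res_lim_cfg e z \<le> ennreal X"
      by (simp add: res_lim_cfg_eq_SUP SUP_least)
  qed (auto simp: A_def intro: order_trans[OF res_cfg_le_res_lim_cfg])
  finally show ?thesis by (simp add: X_def)
qed

lemma exists_cap_and_level:
  assumes "integrable law (\<lambda>z. real (offspring z []))" and "1 < (\<integral>z. real (offspring z []) \<partial>law)"
  shows "\<exists>C L. 0 \<le> L \<and> 1 < good_mean C L"
proof -
  have "(\<lambda>C. capped_mean C) \<longlonglongrightarrow> (\<integral>z. real (offspring z []) \<partial>law)"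
    unfolding capped_mean_def
  proof (rule integral_dominated_convergence[where w="\<lambda>z. real (offspring z [])"])
    have "(\<lambda>C. real (min (offspring z []) C)) \<longlonglongrightarrow> real (offspring z [])" for z
      by (intro tendsto_eventually eventually_sequentiallyI[of "offspring z []"]) simp
    then show "AE z in law. (\<lambda>C. real (min (offspring z []) C)) \<longlonglongrightarrow> real (offspring z [])"
      by simp
  qed (use assms(1) in simp_all)
  moreover have "(\<lambda>L. prob_edge_le (real L)) \<longlonglongrightarrow> measure law (\<Union>L. {z. edge_res z [] \<le> real L})"
    unfolding prob_edge_le_def
    by (intro law.finite_Lim_measure_incseq) (auto simp: incseq_def sets_Collect_config)
  moreover have "(\<Union>L. {z. edge_res z [] \<le> real L}) = space law"
    by (auto intro: real_arch_simple)
  ultimately have "(\<lambda>C. capped_mean C * prob_edge_le (real C)) \<longlonglongrightarrow> (\<integral>z. real (offspring z []) \<partial>law) * 1"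
    using law.prob_space by (intro tendsto_mult) simp_all
  from order_tendstoD(1)[OF this] assms(2)
  have "eventually (\<lambda>C. 1 < capped_mean C * prob_edge_le (real C)) sequentially"
    by simp
  then obtain C where "1 < capped_mean C * prob_edge_le (real C)"
    by (auto simp: eventually_sequentially)
  then show ?thesis unfolding good_mean_def by (intro exI[of _ C] exI[of _ "real C"]) simp
qed

lemma exists_offspring_prob_pos:
  assumes "integrable law (\<lambda>z. real (offspring z []))" and "1 < (\<integral>z. real (offspring z []) \<partial>law)"
  shows "\<exists>m\<ge>2. 0 < offspring_prob m"
proof (rule ccontr)
  assume "\<not> (\<exists>m\<ge>2. 0 < offspring_prob m)"
  then have "measure law {z. offspring z [] = m} = 0" if "2 \<le> m" for m
    using that measure_nonneg[of law "{z. offspring z [] = m}"]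
    unfolding offspring_prob_def by (meson not_less order.antisym)
  moreover have "{z. offspring z [] = m} \<in> sets law" for m
    by (simp add: sets_Collect_config)
  ultimately have "AE z in law. offspring z [] \<noteq> m" if "2 \<le> m" for m
    using that by (intro AE_I'[of "{z. offspring z [] = m}"]) (auto simp: law.emeasure_eq_measure)
  then have "AE z in law. \<forall>m. 2 \<le> m \<longrightarrow> offspring z [] \<noteq> m"
    by (subst AE_all_countable) (auto intro: AE_mp[OF _ AE_I2])
  then have "AE z in law. real (offspring z []) \<le> 1"
  proof eventually_elim
    case (elim z)
    then show ?case by (cases "2 \<le> offspring z []") auto
  qed
  then have "(\<integral>z. real (offspring z []) \<partial>law) \<le> (\<integral>z. 1 \<partial>law)"
    using assms(1) by (intro integral_mono_AE) auto
  with assms(2) show False using law.prob_space by simp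
qed

lemma prob_res_lim_cfg_eq_top_less_1:
  assumes mean_int: "integrable law (\<lambda>z. real (offspring z []))"
    and mean_gt_1: "1 < (\<integral>z. real (offspring z []) \<partial>law)" and "0 < e"
  shows "measure law {z. res_lim_cfg e z = top} < 1"
proof -
  obtain C L where "0 \<le> L" and \<mu>: "1 < good_mean C L"
    using exists_cap_and_level[OF mean_int mean_gt_1] by blast
  define \<mu> where "\<mu> = good_mean C L"
  define s where "s = 1 / (8 * (real C ^ 2 / (\<mu> * (\<mu> - 1))) + 8)"
  have "0 < s" using \<mu> by (simp add: s_def \<mu>_def add_nonneg_pos)
  obtain K where "4 / s < \<mu> ^ K"
    using real_arch_pow[of \<mu> "4 / s"] \<mu> by (auto simp: \<mu>_def)
  then have "4 < \<mu> ^ K * s"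
    using \<open>0 < s\<close> by (simp add: pos_divide_less_eq)
  moreover have "\<mu> ^ K * s \<le> \<mu> ^ Suc K * s"
    using \<mu> \<open>0 < s\<close> by (intro mult_right_mono power_increasing) (auto simp: \<mu>_def)
  ultimately have "4 \<le> \<mu> ^ Suc K * s"
    by linarith
  define F where "F = {z. res_lim_cfg e z \<le> ennreal (2 * real (Suc K) * (L + e))}"
  have "s \<le> measure law F"
    using prob_res_lim_cfg_bounded_ge[of e L C "Suc K"] \<open>4 \<le> \<mu> ^ Suc K * s\<close> \<open>0 < e\<close> \<open>0 \<le> L\<close> \<mu>
    by (simp add: F_def s_def \<mu>_def)
  have "F \<in> sets law" by (simp add: F_def sets_Collect_config)
  then have "measure law {z. res_lim_cfg e z = top} \<le> measure law (space law - F)"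
    by (intro law.finite_measure_mono sets.compl_sets) (auto simp: F_def top_unique)
  also have "\<dots> = 1 - measure law F"
    using \<open>F \<in> sets law\<close> by (rule law.prob_compl)
  finally show ?thesis
    using \<open>0 < s\<close> \<open>s \<le> measure law F\<close> by linarith
qed

theorem measure_res_lim_cfg_eq_top_eq_extinct:
  assumes mean_int: "integrable law (\<lambda>z. real (offspring z []))"
    and mean_gt_1: "1 < (\<integral>z. real (offspring z []) \<partial>law)" and "0 < e"
  shows "measure law {z. res_lim_cfg e z = top} = measure law {z. extinct (offspring z)}"
proof -
  have "measure law {z. extinct (offspring z)} \<le> measure law {z. res_lim_cfg e z = top}"
    by (intro law.finite_measure_mono) (auto simp: sets_Collect_config res_lim_cfg_eq_top_if_extinct)
  moreover obtain m where "2 \<le> m" "0 < offspring_prob m"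
    using exists_offspring_prob_pos[OF mean_int mean_gt_1] by blast
  ultimately show ?thesis
    using prob_res_lim_cfg_eq_top_less_1[OF assms] offspring_prob_sums
      fixed_point_res_lim_cfg fixed_point_extinct
    by (intro power_series_fixed_point_unique[where p=offspring_prob and m=m])
       (auto simp: offspring_prob_def)
qed

lemma measure_res_tree_eq_top:
  "measure M {\<omega> \<in> space M. res_tree (\<lambda>v. N v \<omega>) (\<lambda>v. Rs v \<omega>) e = top}
    = measure law {z. res_lim_cfg e z = top}"
proof -
  have "{z. res_lim_cfg e z = top} \<in> sets config_space"
    by (rule sets_Collect_config) measurable
  from measure_law_eq[OF this] show ?thesis
    by (simp add: res_lim_cfg_def res_tree_eq_res_lim offspring_config_of edge_res_config_of)
qed

lemma measure_eventually_extinct: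
  "measure M {\<omega> \<in> space M. \<exists>n0. \<forall>n\<ge>n0. generation (\<lambda>v. N v \<omega>) n = {}}
    = measure law {z. extinct (offspring z)}"
  by (simp add: measure_law_eq sets_Collect_config offspring_config_of eventually_generation_empty_iff_extinct)

lemma offspring_mean_law:
  "integrable law (\<lambda>z. real (offspring z [])) \<longleftrightarrow> integrable M (\<lambda>\<omega>. real (N [] \<omega>))"
  "(\<integral>z. real (offspring z []) \<partial>law) = (\<integral>\<omega>. real (N [] \<omega>) \<partial>M)"
  by (simp_all add: law_def integrable_distr_eq integral_distr offspring_config_of)

end

theorem lemma2:
  fixes M :: "'a measure"
    and N :: "nat list \<Rightarrow> 'a \<Rightarrow> nat"
    and Rs :: "nat list \<Rightarrow> 'a \<Rightarrow> real"
    and \<gamma> q :: real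
  assumes "prob_space M"
    and N_meas: "\<And>v. N v \<in> measurable M (count_space UNIV)"
    and Rs_meas: "\<And>v. Rs v \<in> borel_measurable M"
    and Rs_nonneg: "\<And>v \<omega>. \<omega> \<in> space M \<Longrightarrow> 0 \<le> Rs v \<omega>"
    and indep: "prob_space.indep_vars M (\<lambda>_. borel)
                  (\<lambda>j. case j of Inl v \<Rightarrow> (\<lambda>\<omega>. real (N v \<omega>)) | Inr v \<Rightarrow> Rs v) UNIV"
    and N_ident: "\<And>v. distr M (count_space UNIV) (N v) = distr M (count_space UNIV) (N [])"
    and Rs_ident: "\<And>v. distr M borel (Rs v) = distr M borel (Rs [])"
    and mean_int: "integrable M (\<lambda>\<omega>. real (N [] \<omega>))"
    and mean: "\<gamma> = integral\<^sup>L M (\<lambda>\<omega>. real (N [] \<omega>))"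
    and gamma_gt1: "1 < \<gamma>"
    and q_def: "q = measure M {\<omega> \<in> space M.
                   \<exists>n0. \<forall>n\<ge>n0. generation (\<lambda>v. N v \<omega>) n = {}}"
  shows "\<forall>\<epsilon>>0.
           measure M {\<omega> \<in> space M. res_tree (\<lambda>v. N v \<omega>) (\<lambda>v. Rs v \<omega>) \<epsilon> = top}
             = measure M {\<omega> \<in> space M. res_tree (\<lambda>v. N v \<omega>) (\<lambda>v. Rs v \<omega>) 0 = top}
         \<and> measure M {\<omega> \<in> space M. res_tree (\<lambda>v. N v \<omega>) (\<lambda>v. Rs v \<omega>) 0 = top} = q"
proof -
  interpret bgw_tree M N Rs
    by (rule bgw_tree.intro) fact+
  have mean_law: "integrable law (\<lambda>z. real (offspring z []))" "1 < (\<integral>z. real (offspring z []) \<partial>law)"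
    using mean_int mean gamma_gt1 by (simp_all add: offspring_mean_law)
  have "measure law {z. res_lim_cfg e z = top} = measure law {z. res_lim_cfg 0 z = top}
      \<and> measure law {z. res_lim_cfg 0 z = top} = measure law {z. extinct (offspring z)}"
    if "0 < e" for e
  proof -
    have "measure law {z. extinct (offspring z)} \<le> measure law {z. res_lim_cfg 0 z = top}"
      by (intro law.finite_measure_mono) (auto simp: sets_Collect_config res_lim_cfg_eq_top_if_extinct)
    moreover have "measure law {z. res_lim_cfg 0 z = top} \<le> measure law {z. res_lim_cfg e z = top}"
      using \<open>0 < e\<close> by (intro law.finite_measure_mono)
        (auto simp: sets_Collect_config intro: res_lim_cfg_eq_top_mono_eps[of 0 e])
    ultimately show ?thesis
      using measure_res_lim_cfg_eq_top_eq_extinct[OF mean_law that] by linarith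
  qed
  then show ?thesis
    by (simp add: measure_res_tree_eq_top measure_eventually_extinct q_def)
qed

end
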